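(* Let $\mathcal{C}$ be a category and $F\colon\mathcal{C}\to\mathcal{E}ns$ a functor satisfying Grothendieck's axioms G0–G6 below (in either variant). Then the full subcategory $\mathcal{C}on(\mathcal{C})$ of non-empty connected objects of $\mathcal{C}$, together with the restriction of $F$ to it, satisfies the axioms C0–C3 below.
   Context: An arrow $f\colon X\to Y$ is a strict epimorphism if for every $g\colon X\to Z$ compatible with $f$ (for all objects $C$ and $u,v\colon C\to X$, $f\circ u=f\circ v$ implies $g\circ u=g\circ v$) there is a unique $k$ with $g=k\circ f$. For a group $H$ acting on an object $X$ by automorphisms (homomorphism $H\to\mathrm{Aut}(X)^{op}$) the quotient $q\colon X\to X/H$ is universal among arrows with $q\circ h=q$ for all $h\in H$. An object $X$ is finite if $F(X)$ is finite. An object $A$ is connected if $A\cong A_1\amalg A_2$ implies $A_1$ or $A_2$ is initial; non-empty means not initial. Grothendieck's axioms (two variants: "coproducts" in G2, G5 means either arbitrary small coproducts, or only finite coproducts): G0: for every $X$ and $x\in F(X)$ there are a finite object $Y$, $y\in F(Y)$ and $f\colon Y\to X$ with $F(f)(y)=x$. G1: $\mathcal{C}$ has a terminal object and fibre products. G2: $\mathcal{C}$ has an initial object, coproducts, and quotients of objects by actions of finite groups. G3: every $f\colon X\to Y$ factors as a strict epimorphism $X\to I$ followed by a monomorphism $I\to Y$, and there is a subobject $J\to Y$ with $I\amalg J\cong Y$ via the induced map. G4: $F$ preserves finite limits. G5: $F$ preserves the initial object, coproducts, quotients by actions of finite groups, and sends strict epimorphisms to surjections. G6: $F$ reflects isomorphisms.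 For a pair $(\mathcal{D},F)$, the diagram $\Gamma_F$ has objects $(a,A)$, $a\in F(A)$, and morphisms $(a,A)\to(a',A')$ the arrows $f$ with $F(f)(a)=a'$, preordered by existence of morphisms. Axioms C0–C3 for $(\mathcal{D},F)$: C0: $F(A)\neq\emptyset$ for all $A$ and every arrow of $\mathcal{D}$ is a strict epimorphism. C1: for every $A$ and finite group $H$ acting on $A$, the quotient $A\to A/H$ exists in $\mathcal{D}$ and $F(A)/H\to F(A/H)$ is bijective. C2: each $F(A)$ is finite and $F$ sends strict epimorphisms to surjections. C3: every finite family of objects of $\Gamma_F$ has a meet. *)

theory Defs
  imports "HOL-Algebra.Group"
begin

record ('o, 'a) cat =
  cat_obj :: "'o set"
  cat_arr :: "'a set"
  cat_dom :: "'a \<Rightarrow> 'o"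
  cat_cod :: "'a \<Rightarrow> 'o"
  cat_id  :: "'o \<Rightarrow> 'a"
  cat_comp :: "'a \<Rightarrow> 'a \<Rightarrow> 'a"   (* cat_comp C g f = g \<circ> f *)

definition hom :: "('o,'a) cat \<Rightarrow> 'o \<Rightarrow> 'o \<Rightarrow> 'a set" where
  "hom C X Y = {f \<in> cat_arr C. cat_dom C f = X \<and> cat_cod C f = Y}"

definition category :: "('o,'a) cat \<Rightarrow> bool" where
  "category C \<longleftrightarrow>
     (\<forall>f\<in>cat_arr C. cat_dom C f \<in> cat_obj C \<and> cat_cod C f \<in> cat_obj C) \<and>
     (\<forall>X\<in>cat_obj C. cat_id C X \<in> hom C X X) \<and>
     (\<forall>f\<in>cat_arr C. cat_comp C f (cat_id C (cat_dom C f)) = f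
                    \<and> cat_comp C (cat_id C (cat_cod C f)) f = f) \<and>
     (\<forall>f\<in>cat_arr C. \<forall>g\<in>cat_arr C. cat_cod C f = cat_dom C g \<longrightarrow>
          cat_comp C g f \<in> hom C (cat_dom C f) (cat_cod C g)) \<and>
     (\<forall>f\<in>cat_arr C. \<forall>g\<in>cat_arr C. \<forall>h\<in>cat_arr C.
          cat_cod C f = cat_dom C g \<and> cat_cod C g = cat_dom C h \<longrightarrow>
          cat_comp C h (cat_comp C g f) = cat_comp C (cat_comp C h g) f)"

definition set_functor :: "('o,'a) cat \<Rightarrow> ('o \<Rightarrow> 'x set) \<Rightarrow> ('a \<Rightarrow> 'x \<Rightarrow> 'x) \<Rightarrow> bool" where
  "set_functor C Fo Fa \<longleftrightarrow>
     (\<forall>f\<in>cat_arr C. \<forall>x\<in>Fo (cat_dom C f). Fa f x \<in> Fo (cat_cod C f)) \<and>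
     (\<forall>X\<in>cat_obj C. \<forall>x\<in>Fo X. Fa (cat_id C X) x = x) \<and>
     (\<forall>f\<in>cat_arr C. \<forall>g\<in>cat_arr C. cat_cod C f = cat_dom C g \<longrightarrow>
          (\<forall>x\<in>Fo (cat_dom C f). Fa (cat_comp C g f) x = Fa g (Fa f x)))"

definition full_sub :: "('o,'a) cat \<Rightarrow> ('o \<Rightarrow> bool) \<Rightarrow> ('o,'a) cat" where
  "full_sub C P = C\<lparr> cat_obj := {X \<in> cat_obj C. P X},
                     cat_arr := {f \<in> cat_arr C. P (cat_dom C f) \<and> P (cat_cod C f)} \<rparr>"

definition is_initial :: "('o,'a) cat \<Rightarrow> 'o \<Rightarrow> bool" where
  "is_initial C I \<longleftrightarrow> I \<in> cat_obj C \<and> (\<forall>Z\<in>cat_obj C. \<exists>!f. f \<in> hom C I Z)"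

definition is_terminal :: "('o,'a) cat \<Rightarrow> 'o \<Rightarrow> bool" where
  "is_terminal C T \<longleftrightarrow> T \<in> cat_obj C \<and> (\<forall>Z\<in>cat_obj C. \<exists>!f. f \<in> hom C Z T)"

definition mono :: "('o,'a) cat \<Rightarrow> 'a \<Rightarrow> bool" where
  "mono C f \<longleftrightarrow> f \<in> cat_arr C \<and>
     (\<forall>W\<in>cat_obj C. \<forall>u\<in>hom C W (cat_dom C f). \<forall>v\<in>hom C W (cat_dom C f).
         cat_comp C f u = cat_comp C f v \<longrightarrow> u = v)"

definition iso :: "('o,'a) cat \<Rightarrow> 'a \<Rightarrow> bool" where
  "iso C f \<longleftrightarrow> f \<in> cat_arr C \<and>
     (\<exists>g\<in>hom C (cat_cod C f) (cat_dom C f).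
         cat_comp C g f = cat_id C (cat_dom C f) \<and> cat_comp C f g = cat_id C (cat_cod C f))"

definition compatible :: "('o,'a) cat \<Rightarrow> 'a \<Rightarrow> 'a \<Rightarrow> bool" where
  "compatible C f g \<longleftrightarrow> g \<in> cat_arr C \<and> cat_dom C g = cat_dom C f \<and>
     (\<forall>W\<in>cat_obj C. \<forall>u\<in>hom C W (cat_dom C f). \<forall>v\<in>hom C W (cat_dom C f).
         cat_comp C f u = cat_comp C f v \<longrightarrow> cat_comp C g u = cat_comp C g v)"

definition strict_epi :: "('o,'a) cat \<Rightarrow> 'a \<Rightarrow> bool" where
  "strict_epi C f \<longleftrightarrow> f \<in> cat_arr C \<and>
     (\<forall>g. compatible C f g \<longrightarrow>
          (\<exists>!k. k \<in> hom C (cat_cod C f) (cat_cod C g) \<and> g = cat_comp C k f))"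

definition is_coproduct :: "('o,'a) cat \<Rightarrow> 'o \<Rightarrow> 'o \<Rightarrow> 'o \<Rightarrow> 'a \<Rightarrow> 'a \<Rightarrow> bool" where
  "is_coproduct C A1 A2 S i1 i2 \<longleftrightarrow> i1 \<in> hom C A1 S \<and> i2 \<in> hom C A2 S \<and>
     (\<forall>Z\<in>cat_obj C. \<forall>g1\<in>hom C A1 Z. \<forall>g2\<in>hom C A2 Z.
         \<exists>!k. k \<in> hom C S Z \<and> cat_comp C k i1 = g1 \<and> cat_comp C k i2 = g2)"

definition is_pullback :: "('o,'a) cat \<Rightarrow> 'a \<Rightarrow> 'a \<Rightarrow> 'o \<Rightarrow> 'a \<Rightarrow> 'a \<Rightarrow> bool" where
  "is_pullback C f g P p1 p2 \<longleftrightarrow> f \<in> cat_arr C \<and> g \<in> cat_arr C \<and>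
     cat_cod C f = cat_cod C g \<and>
     p1 \<in> hom C P (cat_dom C f) \<and> p2 \<in> hom C P (cat_dom C g) \<and>
     cat_comp C f p1 = cat_comp C g p2 \<and>
     (\<forall>W\<in>cat_obj C. \<forall>u\<in>hom C W (cat_dom C f). \<forall>v\<in>hom C W (cat_dom C g).
         cat_comp C f u = cat_comp C g v \<longrightarrow>
         (\<exists>!k. k \<in> hom C W P \<and> cat_comp C p1 k = u \<and> cat_comp C p2 k = v))"

text \<open>A group G acting on X by automorphisms: a homomorphism G \<rightarrow> Aut(X)^op.\<close>
definition group_action :: "('o,'a) cat \<Rightarrow> 'g monoid \<Rightarrow> 'o \<Rightarrow> ('g \<Rightarrow> 'a) \<Rightarrow> bool" where
  "group_action C G X \<rho> \<longleftrightarrow> group G \<and> X \<in> cat_obj C \<and>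
     (\<forall>h\<in>carrier G. \<rho> h \<in> hom C X X) \<and>
     \<rho> \<one>\<^bsub>G\<^esub> = cat_id C X \<and>
     (\<forall>g\<in>carrier G. \<forall>h\<in>carrier G. \<rho> (g \<otimes>\<^bsub>G\<^esub> h) = cat_comp C (\<rho> h) (\<rho> g))"

definition is_quotient :: "('o,'a) cat \<Rightarrow> 'g monoid \<Rightarrow> 'o \<Rightarrow> ('g \<Rightarrow> 'a) \<Rightarrow> 'o \<Rightarrow> 'a \<Rightarrow> bool" where
  "is_quotient C G X \<rho> Q q \<longleftrightarrow> q \<in> hom C X Q \<and>
     (\<forall>h\<in>carrier G. cat_comp C q (\<rho> h) = q) \<and>
     (\<forall>Z\<in>cat_obj C. \<forall>g\<in>hom C X Z. (\<forall>h\<in>carrier G. cat_comp C g (\<rho> h) = g) \<longrightarrow>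
         (\<exists>!k. k \<in> hom C Q Z \<and> cat_comp C k q = g))"

definition connected_obj :: "('o,'a) cat \<Rightarrow> 'o \<Rightarrow> bool" where
  "connected_obj C A \<longleftrightarrow> A \<in> cat_obj C \<and>
     (\<forall>A1 A2 i1 i2. is_coproduct C A1 A2 A i1 i2 \<longrightarrow> is_initial C A1 \<or> is_initial C A2)"

text \<open>Con(C): the full subcategory of non-empty (= non-initial) connected objects.\<close>
definition Con :: "('o,'a) cat \<Rightarrow> ('o,'a) cat" where
  "Con C = full_sub C (\<lambda>A. connected_obj C A \<and> \<not> is_initial C A)"

text \<open>The canonical map F(X)/H \<rightarrow> F(Q) induced by F(q) is bijective.\<close>
definition quotient_fibre_bij ::
  "('o \<Rightarrow> 'x set) \<Rightarrow> ('a \<Rightarrow> 'x \<Rightarrow> 'x) \<Rightarrow> 'g monoid \<Rightarrow> 'o \<Rightarrow> ('g \<Rightarrow> 'a) \<Rightarrow> 'o \<Rightarrow> 'a \<Rightarrow> bool" where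
  "quotient_fibre_bij Fo Fa G X \<rho> Q q \<longleftrightarrow> Fa q ` Fo X = Fo Q \<and>
     (\<forall>x\<in>Fo X. \<forall>y\<in>Fo X. Fa q x = Fa q y \<longleftrightarrow> (\<exists>h\<in>carrier G. Fa (\<rho> h) x = y))"

section \<open>Grothendieck's axioms (finite-coproduct variant)\<close>

definition G0 :: "('o,'a) cat \<Rightarrow> ('o \<Rightarrow> 'x set) \<Rightarrow> ('a \<Rightarrow> 'x \<Rightarrow> 'x) \<Rightarrow> bool" where
  "G0 C Fo Fa \<longleftrightarrow> (\<forall>X\<in>cat_obj C. \<forall>x\<in>Fo X. \<exists>Y y f.
      Y \<in> cat_obj C \<and> finite (Fo Y) \<and> y \<in> Fo Y \<and> f \<in> hom C Y X \<and> Fa f y = x)"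

definition G1 :: "('o,'a) cat \<Rightarrow> bool" where
  "G1 C \<longleftrightarrow> (\<exists>T. is_terminal C T) \<and>
     (\<forall>f\<in>cat_arr C. \<forall>g\<in>cat_arr C. cat_cod C f = cat_cod C g \<longrightarrow>
        (\<exists>P p1 p2. is_pullback C f g P p1 p2))"

definition G2 :: "('o,'a) cat \<Rightarrow> 'g itself \<Rightarrow> bool" where
  "G2 C (_ :: 'g itself) \<longleftrightarrow> (\<exists>I. is_initial C I) \<and>
     (\<forall>A1\<in>cat_obj C. \<forall>A2\<in>cat_obj C. \<exists>S i1 i2. is_coproduct C A1 A2 S i1 i2) \<and>
     (\<forall>(G :: 'g monoid) X \<rho>. group_action C G X \<rho> \<and> finite (carrier G) \<longrightarrow>
        (\<exists>Q q. is_quotient C G X \<rho> Q q))"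

definition G3 :: "('o,'a) cat \<Rightarrow> bool" where
  "G3 C \<longleftrightarrow> (\<forall>f\<in>cat_arr C. \<exists>I e m J j.
      strict_epi C e \<and> e \<in> hom C (cat_dom C f) I \<and>
      mono C m \<and> m \<in> hom C I (cat_cod C f) \<and> f = cat_comp C m e \<and>
      mono C j \<and> j \<in> hom C J (cat_cod C f) \<and>
      is_coproduct C I J (cat_cod C f) m j)"

text \<open>F preserves finite limits: it preserves the terminal object and fibre products
  (which generate all finite limits).\<close>
definition G4 :: "('o,'a) cat \<Rightarrow> ('o \<Rightarrow> 'x set) \<Rightarrow> ('a \<Rightarrow> 'x \<Rightarrow> 'x) \<Rightarrow> bool" where
  "G4 C Fo Fa \<longleftrightarrow>
     (\<forall>T. is_terminal C T \<longrightarrow> (\<exists>!x. x \<in> Fo T)) \<and>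
     (\<forall>f g P p1 p2. is_pullback C f g P p1 p2 \<longrightarrow>
        bij_betw (\<lambda>z. (Fa p1 z, Fa p2 z)) (Fo P)
          {(x, y). x \<in> Fo (cat_dom C f) \<and> y \<in> Fo (cat_dom C g) \<and> Fa f x = Fa g y})"

definition G5 :: "('o,'a) cat \<Rightarrow> ('o \<Rightarrow> 'x set) \<Rightarrow> ('a \<Rightarrow> 'x \<Rightarrow> 'x) \<Rightarrow> 'g itself \<Rightarrow> bool" where
  "G5 C Fo Fa (_ :: 'g itself) \<longleftrightarrow>
     (\<forall>I. is_initial C I \<longrightarrow> Fo I = {}) \<and>
     (\<forall>A1 A2 S i1 i2. is_coproduct C A1 A2 S i1 i2 \<longrightarrow>
        inj_on (Fa i1) (Fo A1) \<and> inj_on (Fa i2) (Fo A2) \<and>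
        Fa i1 ` Fo A1 \<inter> Fa i2 ` Fo A2 = {} \<and>
        Fa i1 ` Fo A1 \<union> Fa i2 ` Fo A2 = Fo S) \<and>
     (\<forall>(G :: 'g monoid) X \<rho> Q q. group_action C G X \<rho> \<and> finite (carrier G) \<and>
        is_quotient C G X \<rho> Q q \<longrightarrow> quotient_fibre_bij Fo Fa G X \<rho> Q q) \<and>
     (\<forall>f. strict_epi C f \<longrightarrow> Fa f ` Fo (cat_dom C f) = Fo (cat_cod C f))"

definition G6 :: "('o,'a) cat \<Rightarrow> ('o \<Rightarrow> 'x set) \<Rightarrow> ('a \<Rightarrow> 'x \<Rightarrow> 'x) \<Rightarrow> bool" where
  "G6 C Fo Fa \<longleftrightarrow> (\<forall>f\<in>cat_arr C.
      bij_betw (Fa f) (Fo (cat_dom C f)) (Fo (cat_cod C f)) \<longrightarrow> iso C f)"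

definition Gamma :: "('o,'a) cat \<Rightarrow> ('o \<Rightarrow> 'x set) \<Rightarrow> ('x \<times> 'o) set" where
  "Gamma D Fo = {(a, A). A \<in> cat_obj D \<and> a \<in> Fo A}"

definition gamma_le :: "('o,'a) cat \<Rightarrow> ('a \<Rightarrow> 'x \<Rightarrow> 'x) \<Rightarrow> 'x \<times> 'o \<Rightarrow> 'x \<times> 'o \<Rightarrow> bool" where
  "gamma_le D Fa p p' \<longleftrightarrow> (\<exists>f\<in>hom D (snd p) (snd p'). Fa f (fst p) = fst p')"

definition is_meet :: "('o,'a) cat \<Rightarrow> ('o \<Rightarrow> 'x set) \<Rightarrow> ('a \<Rightarrow> 'x \<Rightarrow> 'x)
    \<Rightarrow> ('x \<times> 'o) set \<Rightarrow> 'x \<times> 'o \<Rightarrow> bool" where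
  "is_meet D Fo Fa S m \<longleftrightarrow> m \<in> Gamma D Fo \<and> (\<forall>s\<in>S. gamma_le D Fa m s) \<and>
     (\<forall>n\<in>Gamma D Fo. (\<forall>s\<in>S. gamma_le D Fa n s) \<longrightarrow> gamma_le D Fa n m)"

definition C0 :: "('o,'a) cat \<Rightarrow> ('o \<Rightarrow> 'x set) \<Rightarrow> ('a \<Rightarrow> 'x \<Rightarrow> 'x) \<Rightarrow> bool" where
  "C0 D Fo Fa \<longleftrightarrow> (\<forall>A\<in>cat_obj D. Fo A \<noteq> {}) \<and> (\<forall>f\<in>cat_arr D. strict_epi D f)"

definition C1 :: "('o,'a) cat \<Rightarrow> ('o \<Rightarrow> 'x set) \<Rightarrow> ('a \<Rightarrow> 'x \<Rightarrow> 'x) \<Rightarrow> 'g itself \<Rightarrow> bool" where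
  "C1 D Fo Fa (_ :: 'g itself) \<longleftrightarrow>
     (\<forall>(G :: 'g monoid) A \<rho>. group_action D G A \<rho> \<and> finite (carrier G) \<longrightarrow>
        (\<exists>Q q. is_quotient D G A \<rho> Q q \<and> quotient_fibre_bij Fo Fa G A \<rho> Q q))"

definition C2 :: "('o,'a) cat \<Rightarrow> ('o \<Rightarrow> 'x set) \<Rightarrow> ('a \<Rightarrow> 'x \<Rightarrow> 'x) \<Rightarrow> bool" where
  "C2 D Fo Fa \<longleftrightarrow> (\<forall>A\<in>cat_obj D. finite (Fo A)) \<and>
     (\<forall>f. strict_epi D f \<longrightarrow> Fa f ` Fo (cat_dom D f) = Fo (cat_cod D f))"

definition C3 :: "('o,'a) cat \<Rightarrow> ('o \<Rightarrow> 'x set) \<Rightarrow> ('a \<Rightarrow> 'x \<Rightarrow> 'x) \<Rightarrow> bool" where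
  "C3 D Fo Fa \<longleftrightarrow> (\<forall>S. finite S \<and> S \<subseteq> Gamma D Fo \<longrightarrow> (\<exists>m. is_meet D Fo Fa S m))"

end

theory Submission
  imports Defs
begin

text \<open>
  By G5 the fibre of a coproduct is the disjoint union of the fibres of the summands, and by G2, G5
  and G6 an object is initial exactly when its fibre is empty.  Hence an object with finite fibre
  splits into finitely many connected pieces (induction on the size of the fibre), and arrows out of
  it are determined by their restrictions to non-empty connected objects.  G3 factors an arrow into a
  connected object as a strict epimorphism followed by the inclusion of a summand; when the source is
  non-empty the summand is everything, so by G6 the arrow itself is a strict epimorphism and surjective
  on fibres.  With G0 this makes fibres of connected objects finite.  Compatibility with an arrow
  f between connected objects only needs to be tested on connected objects, since the kernel pair of f
  has finite fibre; this gives C0 and C2.  Quotients in C of connected objects are connected,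
  giving C1.  The terminal object is the top of the preorder on pointed connected objects, and the
  meet of (a, A) and (b, B) is the connected component of A \<times> B through (a, b), giving C3.
\<close>

section \<open>Categories and set-valued functors\<close>

lemma coproduct_injections:
  "is_coproduct C A1 A2 S i1 i2 \<Longrightarrow> i1 \<in> hom C A1 S \<and> i2 \<in> hom C A2 S"
  unfolding is_coproduct_def by auto

lemma coproduct_swap: "is_coproduct C A1 A2 S i1 i2 \<Longrightarrow> is_coproduct C A2 A1 S i2 i1"
  unfolding is_coproduct_def by (auto simp: conj_commute)

lemma pullback_legs:
  assumes "is_pullback C f g P p1 p2" "f \<in> hom C X S" "g \<in> hom C Y S"
  shows "p1 \<in> hom C P X" "p2 \<in> hom C P Y" "cat_comp C f p1 = cat_comp C g p2"
  using assms unfolding is_pullback_def hom_def by auto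

lemma pullback_factor:
  assumes "is_pullback C f g P p1 p2" "f \<in> hom C X S" "g \<in> hom C Y S"
    and "W \<in> cat_obj C" "u \<in> hom C W X" "v \<in> hom C W Y" "cat_comp C f u = cat_comp C g v"
  obtains k where "k \<in> hom C W P" "cat_comp C p1 k = u" "cat_comp C p2 k = v"
proof -
  have "\<forall>W\<in>cat_obj C. \<forall>u\<in>hom C W X. \<forall>v\<in>hom C W Y. cat_comp C f u = cat_comp C g v \<longrightarrow>
      (\<exists>!k. k \<in> hom C W P \<and> cat_comp C p1 k = u \<and> cat_comp C p2 k = v)"
    using assms(1-3) unfolding is_pullback_def hom_def by auto
  then show ?thesis using assms(4-7) that by blast
qed

lemma compatibleD:
  assumes "compatible C f g"
  shows "g \<in> cat_arr C" "cat_dom C g = cat_dom C f"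
    and "W \<in> cat_obj C \<Longrightarrow> u \<in> hom C W (cat_dom C f) \<Longrightarrow> v \<in> hom C W (cat_dom C f) \<Longrightarrow>
      cat_comp C f u = cat_comp C f v \<Longrightarrow> cat_comp C g u = cat_comp C g v"
  using assms unfolding compatible_def by blast+

lemma category_full_sub: "category C \<Longrightarrow> category (full_sub C P)"
  unfolding category_def full_sub_def hom_def by auto

lemma set_functor_full_sub: "set_functor C Fo Fa \<Longrightarrow> set_functor (full_sub C P) Fo Fa"
  unfolding set_functor_def full_sub_def by auto

lemma Con_simps:
  "cat_obj (Con C) = {X \<in> cat_obj C. connected_obj C X \<and> \<not> is_initial C X}"
  "cat_dom (Con C) = cat_dom C" "cat_cod (Con C) = cat_cod C"
  "cat_id (Con C) = cat_id C" "cat_comp (Con C) = cat_comp C"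
  unfolding Con_def full_sub_def by simp_all

lemma arr_iff_hom: "f \<in> cat_arr C \<longleftrightarrow> f \<in> hom C (cat_dom C f) (cat_cod C f)"
  unfolding hom_def by simp

lemma Gamma_iff: "(a, A) \<in> Gamma C Fo \<longleftrightarrow> A \<in> cat_obj C \<and> a \<in> Fo A"
  unfolding Gamma_def by simp

lemma gamma_le_iff: "gamma_le C Fa (a, A) (b, B) \<longleftrightarrow> (\<exists>f\<in>hom C A B. Fa f a = b)"
  unfolding gamma_le_def by simp

lemma hom_Con:
  "f \<in> hom (Con C) X Y \<longleftrightarrow> f \<in> hom C X Y \<and> X \<in> cat_obj (Con C) \<and> Y \<in> cat_obj (Con C)"
  unfolding Con_def full_sub_def hom_def connected_obj_def by auto

locale is_category =
  fixes C :: "('o, 'a) cat"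
  assumes category: "category C"
begin

lemma hom_objs: "f \<in> hom C X Y \<Longrightarrow> X \<in> cat_obj C \<and> Y \<in> cat_obj C"
  using category unfolding category_def hom_def by auto

lemma comp_hom: "f \<in> hom C X Y \<Longrightarrow> g \<in> hom C Y Z \<Longrightarrow> cat_comp C g f \<in> hom C X Z"
  using category unfolding category_def hom_def by auto

lemma comp_assoc:
  "f \<in> hom C X Y \<Longrightarrow> g \<in> hom C Y Z \<Longrightarrow> h \<in> hom C Z W \<Longrightarrow>
    cat_comp C h (cat_comp C g f) = cat_comp C (cat_comp C h g) f"
  using category unfolding category_def hom_def by auto

lemma id_hom: "X \<in> cat_obj C \<Longrightarrow> cat_id C X \<in> hom C X X"
  using category unfolding category_def by auto

lemma comp_id_right: "f \<in> hom C X Y \<Longrightarrow> cat_comp C f (cat_id C X) = f"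
  using category unfolding category_def hom_def by auto

lemma initial_hom_unique: "is_initial C I \<Longrightarrow> u \<in> hom C I X \<Longrightarrow> v \<in> hom C I X \<Longrightarrow> u = v"
  unfolding is_initial_def using hom_objs by blast

lemma terminal_hom_unique: "is_terminal C T \<Longrightarrow> u \<in> hom C X T \<Longrightarrow> v \<in> hom C X T \<Longrightarrow> u = v"
  unfolding is_terminal_def using hom_objs by blast

lemma coproduct_arrow_eqI:
  assumes c: "is_coproduct C A1 A2 S i1 i2" and k: "k \<in> hom C S Z" "k' \<in> hom C S Z"
    and "cat_comp C k i1 = cat_comp C k' i1" "cat_comp C k i2 = cat_comp C k' i2"
  shows "k = k'"
proof -
  have i: "i1 \<in> hom C A1 S" "i2 \<in> hom C A2 S"
    using coproduct_injections[OF c] by auto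
  have "Z \<in> cat_obj C" "cat_comp C k i1 \<in> hom C A1 Z" "cat_comp C k i2 \<in> hom C A2 Z"
    using hom_objs[OF k(1)] comp_hom[OF i(1) k(1)] comp_hom[OF i(2) k(1)] by auto
  then show ?thesis
    using c k assms(4,5) unfolding is_coproduct_def by metis
qed

lemma initial_retract:
  assumes I: "is_initial C I" and f: "f \<in> hom C I X" and g: "g \<in> hom C X I"
    and fg: "cat_comp C f g = cat_id C X"
  shows "is_initial C X"
  unfolding is_initial_def
proof (intro conjI ballI)
  show "X \<in> cat_obj C" using hom_objs[OF f] by simp
  fix Z assume Z: "Z \<in> cat_obj C"
  then obtain k where k: "k \<in> hom C I Z" using I unfolding is_initial_def by blast
  have "h1 = h2" if h: "h1 \<in> hom C X Z" "h2 \<in> hom C X Z" for h1 h2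
  proof -
    have "cat_comp C h1 f = cat_comp C h2 f"
      using initial_hom_unique[OF I comp_hom[OF f h(1)] comp_hom[OF f h(2)]] .
    then have "cat_comp C h1 (cat_comp C f g) = cat_comp C h2 (cat_comp C f g)"
      by (simp add: comp_assoc[OF g f h(1)] comp_assoc[OF g f h(2)])
    then show ?thesis using fg comp_id_right h by simp
  qed
  then show "\<exists>!h. h \<in> hom C X Z" using comp_hom[OF g k] by blast
qed

lemma iso_inverse:
  assumes "iso C f" "f \<in> hom C X Y"
  obtains g where "g \<in> hom C Y X" "cat_comp C g f = cat_id C X" "cat_comp C f g = cat_id C Y"
  using assms unfolding iso_def hom_def by auto

lemma strict_epi_comp_iso:
  assumes e: "strict_epi C e" "e \<in> hom C X I" and m: "m \<in> hom C I Y" "iso C m"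
  shows "strict_epi C (cat_comp C m e)"
proof -
  obtain m' where m': "m' \<in> hom C Y I" "cat_comp C m' m = cat_id C I" "cat_comp C m m' = cat_id C Y"
    using iso_inverse[OF m(2,1)] .
  have f: "cat_comp C m e \<in> hom C X Y" using comp_hom[OF e(2) m(1)] .
  then have f_dom: "cat_dom C (cat_comp C m e) = X" and f_cod: "cat_cod C (cat_comp C m e) = Y"
    unfolding hom_def by auto
  show ?thesis unfolding strict_epi_def
  proof (intro conjI allI impI)
    show "cat_comp C m e \<in> cat_arr C" using f unfolding hom_def by simp
    fix g assume g: "compatible C (cat_comp C m e) g"
    define Z where "Z = cat_cod C g"
    have gZ: "g \<in> hom C X Z"
      using compatibleD(1,2)[OF g] f_dom unfolding arr_iff_hom Z_def by simp
    have "compatible C e g"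
      unfolding compatible_def
    proof (intro conjI ballI impI)
      show "g \<in> cat_arr C" "cat_dom C g = cat_dom C e"
        using gZ e(2) unfolding hom_def by auto
      fix W u v assume W: "W \<in> cat_obj C" and uv: "u \<in> hom C W (cat_dom C e)" "v \<in> hom C W (cat_dom C e)"
        and eq: "cat_comp C e u = cat_comp C e v"
      have uv': "u \<in> hom C W X" "v \<in> hom C W X" using uv e(2) unfolding hom_def by auto
      have "cat_comp C (cat_comp C m e) u = cat_comp C (cat_comp C m e) v"
        using eq by (simp add: comp_assoc[OF uv'(1) e(2) m(1), symmetric]
            comp_assoc[OF uv'(2) e(2) m(1), symmetric])
      then show "cat_comp C g u = cat_comp C g v"
        using compatibleD(3)[OF g W] uv' unfolding f_dom by blast
    qed
    then have "\<exists>!k. k \<in> hom C (cat_cod C e) (cat_cod C g) \<and> g = cat_comp C k e"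
      using e(1) unfolding strict_epi_def by blast
    then have "\<exists>!k. k \<in> hom C I Z \<and> g = cat_comp C k e"
      using e(2) unfolding Z_def hom_def by simp
    then obtain k where k: "k \<in> hom C I Z" "g = cat_comp C k e"
      and k_unique: "\<And>k'. k' \<in> hom C I Z \<Longrightarrow> g = cat_comp C k' e \<Longrightarrow> k' = k"
      by blast
    show "\<exists>!k. k \<in> hom C (cat_cod C (cat_comp C m e)) (cat_cod C g) \<and> g = cat_comp C k (cat_comp C m e)"
      unfolding f_cod Z_def[symmetric]
    proof
      have "cat_comp C (cat_comp C k m') (cat_comp C m e) = cat_comp C (cat_comp C k (cat_comp C m' m)) e"
        by (simp add: comp_assoc[OF e(2) m(1) comp_hom[OF m'(1) k(1)]] comp_assoc[OF m(1) m'(1) k(1)])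
      also have "\<dots> = g" using m'(2) comp_id_right[OF k(1)] k(2) by simp
      finally show "cat_comp C k m' \<in> hom C Y Z \<and> g = cat_comp C (cat_comp C k m') (cat_comp C m e)"
        using comp_hom[OF m'(1) k(1)] by simp
    next
      fix k1 assume "k1 \<in> hom C Y Z \<and> g = cat_comp C k1 (cat_comp C m e)"
      then have k1: "k1 \<in> hom C Y Z" "g = cat_comp C k1 (cat_comp C m e)" by auto
      then have "cat_comp C k1 m = k"
        using k_unique[OF comp_hom[OF m(1) k1(1)]] comp_assoc[OF e(2) m(1) k1(1)] by simp
      then have "cat_comp C k1 (cat_comp C m m') = cat_comp C k m'"
        using comp_assoc[OF m'(1) m(1) k1(1)] by simp
      then show "k1 = cat_comp C k m'" using m'(3) comp_id_right[OF k1(1)] by simp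
    qed
  qed
qed

end

locale set_valued_functor = is_category +
  fixes Fo :: "'o \<Rightarrow> 'x set" and Fa :: "'a \<Rightarrow> 'x \<Rightarrow> 'x"
  assumes set_functor: "set_functor C Fo Fa"
begin

lemma Fa_hom: "f \<in> hom C X Y \<Longrightarrow> x \<in> Fo X \<Longrightarrow> Fa f x \<in> Fo Y"
  using set_functor unfolding set_functor_def hom_def by auto

lemma Fa_comp:
  "f \<in> hom C X Y \<Longrightarrow> g \<in> hom C Y Z \<Longrightarrow> x \<in> Fo X \<Longrightarrow> Fa (cat_comp C g f) x = Fa g (Fa f x)"
  using set_functor unfolding set_functor_def hom_def by auto

lemma Fa_id: "X \<in> cat_obj C \<Longrightarrow> x \<in> Fo X \<Longrightarrow> Fa (cat_id C X) x = x"
  using set_functor unfolding set_functor_def by auto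

lemma Fa_square:
  assumes "f \<in> hom C X Y" "g \<in> hom C Y Z" "f' \<in> hom C X Y'" "g' \<in> hom C Y' Z"
    and "cat_comp C g f = cat_comp C g' f'" "x \<in> Fo X"
  shows "Fa g (Fa f x) = Fa g' (Fa f' x)"
  using Fa_comp[OF assms(1,2,6)] Fa_comp[OF assms(3,4,6)] assms(5) by simp

lemma gamma_le_trans:
  assumes p: "p \<in> Gamma C Fo" and "gamma_le C Fa p q" "gamma_le C Fa q r"
  shows "gamma_le C Fa p r"
proof -
  obtain f g where f: "f \<in> hom C (snd p) (snd q)" "Fa f (fst p) = fst q"
    and g: "g \<in> hom C (snd q) (snd r)" "Fa g (fst q) = fst r"
    using assms(2,3) unfolding gamma_le_def by blast
  have "Fa (cat_comp C g f) (fst p) = fst r"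
    using Fa_comp[OF f(1) g(1)] p f(2) g(2) unfolding Gamma_def by auto
  then show ?thesis unfolding gamma_le_def using comp_hom[OF f(1) g(1)] by blast
qed

lemma C3_if_binary_meets:
  assumes top: "\<exists>m. is_meet C Fo Fa {} m"
    and binary: "\<And>p q. p \<in> Gamma C Fo \<Longrightarrow> q \<in> Gamma C Fo \<Longrightarrow> \<exists>m. is_meet C Fo Fa {p, q} m"
  shows "C3 C Fo Fa"
  unfolding C3_def
proof (intro allI impI, elim conjE)
  fix S :: "('x \<times> 'o) set" assume "finite S" "S \<subseteq> Gamma C Fo"
  then show "\<exists>m. is_meet C Fo Fa S m"
  proof (induction S rule: finite_induct)
    case empty
    show ?case using top by blast
  next
    case (insert x S)
    then obtain m where "is_meet C Fo Fa S m" by auto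
    then have m: "m \<in> Gamma C Fo" "\<forall>s\<in>S. gamma_le C Fa m s"
      "\<forall>n\<in>Gamma C Fo. (\<forall>s\<in>S. gamma_le C Fa n s) \<longrightarrow> gamma_le C Fa n m"
      unfolding is_meet_def by auto
    obtain m' where "is_meet C Fo Fa {m, x} m'"
      using binary[OF m(1)] insert.prems by blast
    then have m': "m' \<in> Gamma C Fo" "gamma_le C Fa m' m" "gamma_le C Fa m' x"
      "\<forall>n\<in>Gamma C Fo. gamma_le C Fa n m \<and> gamma_le C Fa n x \<longrightarrow> gamma_le C Fa n m'"
      unfolding is_meet_def by auto
    have "\<forall>s\<in>S. gamma_le C Fa m' s"
      using gamma_le_trans[OF m'(1) m'(2)] m(2) by blast
    then have "is_meet C Fo Fa (insert x S) m'"
      unfolding is_meet_def using m m' by auto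
    then show ?case by blast
  qed
qed

definition pointed_component :: "'o \<Rightarrow> 'x \<Rightarrow> 'o \<Rightarrow> 'x \<Rightarrow> 'a \<Rightarrow> bool" where
  "pointed_component P z K c \<iota> \<longleftrightarrow> connected_obj C K \<and> c \<in> Fo K \<and> \<iota> \<in> hom C K P \<and> Fa \<iota> c = z \<and>
     (\<forall>D d k. connected_obj C D \<and> d \<in> Fo D \<and> k \<in> hom C D P \<and> Fa k d = z \<longrightarrow>
        (\<exists>k'\<in>hom C D K. Fa k' d = c))"

end

section \<open>Consequences of Grothendieck's axioms\<close>

locale galois_category = set_valued_functor C Fo Fa
  for C :: "('o, 'a) cat" and Fo :: "'o \<Rightarrow> 'x set" and Fa :: "'a \<Rightarrow> 'x \<Rightarrow> 'x" +
  fixes group_type :: "'g itself"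
  assumes G0: "G0 C Fo Fa" and G1: "G1 C" and G2: "G2 C group_type" and G3: "G3 C"
    and G4: "G4 C Fo Fa" and G5: "G5 C Fo Fa group_type" and G6: "G6 C Fo Fa"
begin

lemma finite_fibre_cover:
  "X \<in> cat_obj C \<Longrightarrow> x \<in> Fo X \<Longrightarrow> \<exists>Y y f. finite (Fo Y) \<and> y \<in> Fo Y \<and> f \<in> hom C Y X \<and> Fa f y = x"
  using G0 unfolding G0_def by fastforce

lemma terminal_exists: "\<exists>T. is_terminal C T"
  using G1 unfolding G1_def by simp

lemma pullback_exists:
  assumes "f \<in> hom C X S" "g \<in> hom C Y S"
  shows "\<exists>P p1 p2. is_pullback C f g P p1 p2"
proof -
  have "\<forall>f\<in>cat_arr C. \<forall>g\<in>cat_arr C. cat_cod C f = cat_cod C g \<longrightarrow>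
      (\<exists>P p1 p2. is_pullback C f g P p1 p2)"
    using G1 unfolding G1_def by simp
  then show ?thesis using assms unfolding hom_def by simp
qed

lemma initial_exists: "\<exists>I. is_initial C I"
  using G2 unfolding G2_def by simp

lemma quotient_exists:
  fixes G :: "'g monoid"
  shows "group_action C G X \<rho> \<Longrightarrow> finite (carrier G) \<Longrightarrow> \<exists>Q q. is_quotient C G X \<rho> Q q"
  using G2 unfolding G2_def by simp

lemma image_factorization:
  assumes "f \<in> hom C X Y"
  shows "\<exists>I e m J j. strict_epi C e \<and> e \<in> hom C X I \<and> m \<in> hom C I Y \<and>
    f = cat_comp C m e \<and> is_coproduct C I J Y m j"
proof -
  have "\<forall>f\<in>cat_arr C. \<exists>I e m J j. strict_epi C e \<and> e \<in> hom C (cat_dom C f) I \<and>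
      m \<in> hom C I (cat_cod C f) \<and> f = cat_comp C m e \<and> is_coproduct C I J (cat_cod C f) m j"
    using G3 unfolding G3_def by blast
  moreover have "f \<in> cat_arr C" "cat_dom C f = X" "cat_cod C f = Y"
    using assms unfolding hom_def by auto
  ultimately show ?thesis by blast
qed

lemma terminal_fibre: "is_terminal C T \<Longrightarrow> \<exists>!t. t \<in> Fo T"
  using G4 unfolding G4_def by simp

lemma pullback_fibre:
  assumes "is_pullback C f g P p1 p2" "f \<in> hom C X S" "g \<in> hom C Y S"
  shows "bij_betw (\<lambda>z. (Fa p1 z, Fa p2 z)) (Fo P) {(x, y). x \<in> Fo X \<and> y \<in> Fo Y \<and> Fa f x = Fa g y}"
proof -
  have "bij_betw (\<lambda>z. (Fa p1 z, Fa p2 z)) (Fo P)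
      {(x, y). x \<in> Fo (cat_dom C f) \<and> y \<in> Fo (cat_dom C g) \<and> Fa f x = Fa g y}"
    using G4 assms(1) unfolding G4_def by simp
  then show ?thesis using assms(2,3) unfolding hom_def by simp
qed

lemma initial_fibre: "is_initial C I \<Longrightarrow> Fo I = {}"
  using G5 unfolding G5_def by simp

lemma coproduct_fibre:
  "is_coproduct C A1 A2 S i1 i2 \<Longrightarrow> inj_on (Fa i1) (Fo A1) \<and> inj_on (Fa i2) (Fo A2) \<and>
    Fa i1 ` Fo A1 \<inter> Fa i2 ` Fo A2 = {} \<and> Fa i1 ` Fo A1 \<union> Fa i2 ` Fo A2 = Fo S"
  using G5 unfolding G5_def by simp

lemma quotient_fibre:
  fixes G :: "'g monoid"
  shows "group_action C G X \<rho> \<Longrightarrow> finite (carrier G) \<Longrightarrow> is_quotient C G X \<rho> Q q \<Longrightarrow>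
    quotient_fibre_bij Fo Fa G X \<rho> Q q"
  using G5 unfolding G5_def by simp

lemma strict_epi_fibre_surj:
  assumes "strict_epi C f" "f \<in> hom C X Y"
  shows "Fa f ` Fo X = Fo Y"
proof -
  have "Fa f ` Fo (cat_dom C f) = Fo (cat_cod C f)"
    using G5 assms(1) unfolding G5_def by simp
  then show ?thesis using assms(2) unfolding hom_def by simp
qed

lemma iso_if_fibre_bij: "f \<in> hom C X Y \<Longrightarrow> bij_betw (Fa f) (Fo X) (Fo Y) \<Longrightarrow> iso C f"
  using G6 unfolding G6_def hom_def by simp

lemma initial_iff_fibre_empty:
  assumes X: "X \<in> cat_obj C"
  shows "is_initial C X \<longleftrightarrow> Fo X = {}"
proof
  assume "Fo X = {}"
  obtain I where I: "is_initial C I" using initial_exists ..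
  then obtain f where f: "f \<in> hom C I X" using X unfolding is_initial_def by blast
  have "bij_betw (Fa f) (Fo I) (Fo X)"
    using \<open>Fo X = {}\<close> initial_fibre[OF I] by (simp add: bij_betw_def)
  then obtain g where "g \<in> hom C X I" "cat_comp C f g = cat_id C X"
    using iso_inverse[OF iso_if_fibre_bij[OF f] f] by metis
  then show "is_initial C X" using initial_retract[OF I f] by blast
qed (rule initial_fibre)

lemma obj_Con: "X \<in> cat_obj (Con C) \<longleftrightarrow> connected_obj C X \<and> Fo X \<noteq> {}"
  using initial_iff_fibre_empty unfolding Con_simps connected_obj_def by auto

lemma connected_objI:
  assumes X: "X \<in> cat_obj C"
    and split: "\<And>A1 A2 i1 i2. is_coproduct C A1 A2 X i1 i2 \<Longrightarrow> Fo A1 = {} \<or> Fo A2 = {}"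
  shows "connected_obj C X"
  unfolding connected_obj_def
proof (intro conjI allI impI X)
  fix A1 A2 i1 i2 assume c: "is_coproduct C A1 A2 X i1 i2"
  have "i1 \<in> hom C A1 X" "i2 \<in> hom C A2 X"
    using coproduct_injections[OF c] by auto
  then have "A1 \<in> cat_obj C" "A2 \<in> cat_obj C"
    using hom_objs by auto
  then show "is_initial C A1 \<or> is_initial C A2"
    using split[OF c] initial_iff_fibre_empty by blast
qed

lemma connected_objD:
  "connected_obj C X \<Longrightarrow> is_coproduct C A1 A2 X i1 i2 \<Longrightarrow> Fo A1 = {} \<or> Fo A2 = {}"
  unfolding connected_obj_def using initial_fibre by blast

lemma disconnected_split:
  assumes "X \<in> cat_obj C" "\<not> connected_obj C X"
  obtains A1 A2 i1 i2 where "is_coproduct C A1 A2 X i1 i2" "Fo A1 \<noteq> {}" "Fo A2 \<noteq> {}"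
  using assms connected_objI by blast

lemma coproduct_fibre_card_less:
  assumes c: "is_coproduct C A1 A2 S i1 i2" and S: "finite (Fo S)" and A2: "Fo A2 \<noteq> {}"
  shows "finite (Fo A1)" "card (Fo A1) < card (Fo S)"
proof -
  have inj: "inj_on (Fa i1) (Fo A1)" and sub: "Fa i1 ` Fo A1 \<subset> Fo S"
    using coproduct_fibre[OF c] A2 by blast+
  show "finite (Fo A1)" using finite_subset[OF psubset_imp_subset[OF sub] S] finite_imageD[OF _ inj] by blast
  show "card (Fo A1) < card (Fo S)" using psubset_card_mono[OF S sub] card_image[OF inj] by simp
qed

lemma image_factorization_onto_connected:
  assumes f: "f \<in> hom C X Y" and Y: "connected_obj C Y" and X: "Fo X \<noteq> {}"
  obtains I e m where "strict_epi C e" "e \<in> hom C X I" "m \<in> hom C I Y" "f = cat_comp C m e"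
    "bij_betw (Fa m) (Fo I) (Fo Y)"
proof -
  obtain I e m J j where d: "strict_epi C e" "e \<in> hom C X I" "m \<in> hom C I Y"
    "f = cat_comp C m e" "is_coproduct C I J Y m j"
    using image_factorization[OF f] by blast
  have "Fo I \<noteq> {}" using X Fa_hom[OF d(2)] by blast
  then have "Fo J = {}" using connected_objD[OF Y d(5)] by blast
  then have "bij_betw (Fa m) (Fo I) (Fo Y)"
    using coproduct_fibre[OF d(5)] by (simp add: bij_betw_def)
  then show thesis using that d(1-4) by blast
qed

lemma fibre_surj_onto_connected:
  assumes f: "f \<in> hom C X Y" and Y: "connected_obj C Y" and X: "Fo X \<noteq> {}"
  shows "Fa f ` Fo X = Fo Y"
proof -
  obtain I e m where d: "strict_epi C e" "e \<in> hom C X I" "m \<in> hom C I Y" "f = cat_comp C m e"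
    "bij_betw (Fa m) (Fo I) (Fo Y)"
    using image_factorization_onto_connected[OF assms] .
  have "Fa f x = Fa m (Fa e x)" if "x \<in> Fo X" for x
    using Fa_comp[OF d(2,3) that] d(4) by simp
  then have "Fa f ` Fo X = Fa m ` Fa e ` Fo X"
    unfolding image_image by (rule image_cong[OF refl])
  also have "\<dots> = Fo Y"
    using strict_epi_fibre_surj[OF d(1,2)] d(5) by (simp add: bij_betw_def)
  finally show ?thesis .
qed

lemma strict_epi_onto_connected:
  assumes f: "f \<in> hom C X Y" and Y: "connected_obj C Y" and X: "Fo X \<noteq> {}"
  shows "strict_epi C f"
proof -
  obtain I e m where d: "strict_epi C e" "e \<in> hom C X I" "m \<in> hom C I Y" "f = cat_comp C m e"
    "bij_betw (Fa m) (Fo I) (Fo Y)"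
    using image_factorization_onto_connected[OF assms] .
  show ?thesis
    using strict_epi_comp_iso[OF d(1,2,3) iso_if_fibre_bij[OF d(3,5)]] d(4) by simp
qed

lemma connected_fibre_finite:
  assumes X: "connected_obj C X"
  shows "finite (Fo X)"
proof (cases "Fo X = {}")
  case False
  then obtain x where "x \<in> Fo X" by blast
  moreover have "X \<in> cat_obj C" using X unfolding connected_obj_def by simp
  ultimately obtain Y y f where Y: "finite (Fo Y)" "y \<in> Fo Y" "f \<in> hom C Y X"
    using finite_fibre_cover by blast
  then have "Fo X = Fa f ` Fo Y" using fibre_surj_onto_connected[OF Y(3) X] by blast
  then show ?thesis using Y(1) by simp
qed simp

lemma connected_map_into_summand:
  assumes D: "connected_obj C D" and h: "h \<in> hom C D S" and c: "is_coproduct C Q1 Q2 S i1 i2"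
  shows "Fa h ` Fo D \<subseteq> Fa i1 ` Fo Q1 \<or> Fa h ` Fo D \<subseteq> Fa i2 ` Fo Q2"
proof -
  have i1: "i1 \<in> hom C Q1 S" using coproduct_injections[OF c] by blast
  have cover: "Fo S = Fa i1 ` Fo Q1 \<union> Fa i2 ` Fo Q2" using coproduct_fibre[OF c] by simp
  obtain P p1 p2 where pb: "is_pullback C h i1 P p1 p2" using pullback_exists[OF h i1] by blast
  note legs = pullback_legs[OF pb h i1]
  have pairs: "(\<lambda>w. (Fa p1 w, Fa p2 w)) ` Fo P = {(x, y). x \<in> Fo D \<and> y \<in> Fo Q1 \<and> Fa h x = Fa i1 y}"
    using pullback_fibre[OF pb h i1] unfolding bij_betw_def by simp
  show ?thesis
  proof (cases "Fo P = {}")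
    case True
    have "Fa h x \<in> Fa i2 ` Fo Q2" if x: "x \<in> Fo D" for x
    proof -
      have "Fa h x \<notin> Fa i1 ` Fo Q1"
      proof
        assume "Fa h x \<in> Fa i1 ` Fo Q1"
        then obtain y where "y \<in> Fo Q1" "Fa h x = Fa i1 y" by blast
        then have "(x, y) \<in> (\<lambda>w. (Fa p1 w, Fa p2 w)) ` Fo P" unfolding pairs using x by simp
        then show False using True by blast
      qed
      then show ?thesis using Fa_hom[OF h x] cover by blast
    qed
    then show ?thesis by blast
  next
    case False
    then have "Fo D = Fa p1 ` Fo P" using fibre_surj_onto_connected[OF legs(1) D] by simp
    moreover have "Fa h (Fa p1 w) \<in> Fa i1 ` Fo Q1" if "w \<in> Fo P" for w
      using Fa_square[OF legs(1) h legs(2) i1 legs(3) that] Fa_hom[OF legs(2) that] by simp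
    ultimately have "Fa h ` Fo D \<subseteq> Fa i1 ` Fo Q1" by auto
    then show ?thesis ..
  qed
qed

lemma connected_map_factors_through_summand:
  assumes D: "connected_obj C D" and h: "h \<in> hom C D S" and c: "is_coproduct C Q1 Q2 S i1 i2"
    and d: "d \<in> Fo D" and z: "z \<in> Fo Q1" and hd: "Fa h d = Fa i1 z"
  obtains h' where "h' \<in> hom C D Q1" "h = cat_comp C i1 h'" "Fa h' d = z"
proof -
  have i1: "i1 \<in> hom C Q1 S" using coproduct_injections[OF c] by blast
  have inj: "inj_on (Fa i1) (Fo Q1)" using coproduct_fibre[OF c] by blast
  obtain P p1 p2 where pb: "is_pullback C h i1 P p1 p2" using pullback_exists[OF h i1] by blast
  note legs = pullback_legs[OF pb h i1]
  note pairing = pullback_fibre[OF pb h i1]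
  have square: "Fa h (Fa p1 w) = Fa i1 (Fa p2 w)" if "w \<in> Fo P" for w
    using Fa_square[OF legs(1) h legs(2) i1 legs(3) that] .
  \<comment> \<open>the pullback of i1 along h is non-empty, hence maps onto D and injectively, so p1 is invertible by G6\<close>
  have "(d, z) \<in> (\<lambda>w. (Fa p1 w, Fa p2 w)) ` Fo P"
    using pairing d z hd unfolding bij_betw_def by auto
  then have "Fa p1 ` Fo P = Fo D"
    using fibre_surj_onto_connected[OF legs(1) D] by blast
  moreover have "inj_on (Fa p1) (Fo P)"
  proof (rule inj_onI)
    fix w w' assume w: "w \<in> Fo P" "w' \<in> Fo P" and eq: "Fa p1 w = Fa p1 w'"
    then have "Fa i1 (Fa p2 w) = Fa i1 (Fa p2 w')" using square w by metis
    then have "Fa p2 w = Fa p2 w'"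
      using inj_onD[OF inj _ Fa_hom[OF legs(2) w(1)] Fa_hom[OF legs(2) w(2)]] by blast
    then show "w = w'" using pairing w eq unfolding bij_betw_def inj_on_def by blast
  qed
  ultimately have "bij_betw (Fa p1) (Fo P) (Fo D)" unfolding bij_betw_def by blast
  then obtain q where q: "q \<in> hom C D P" "cat_comp C p1 q = cat_id C D"
    using iso_inverse[OF iso_if_fibre_bij[OF legs(1)] legs(1)] by blast
  define h' where "h' = cat_comp C p2 q"
  have h': "h' \<in> hom C D Q1" unfolding h'_def using comp_hom[OF q(1) legs(2)] .
  have "cat_comp C i1 h' = cat_comp C (cat_comp C h p1) q"
    unfolding h'_def using comp_assoc[OF q(1) legs(2) i1] legs(3) by simp
  also have "\<dots> = h"
    using comp_assoc[OF q(1) legs(1) h] q(2) comp_id_right[OF h] by simp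
  finally have h_eq: "h = cat_comp C i1 h'" ..
  have "Fa i1 (Fa h' d) = Fa i1 z" using Fa_comp[OF h' i1 d] h_eq hd by simp
  then have "Fa h' d = z" using inj_onD[OF inj _ Fa_hom[OF h' d] z] by blast
  then show thesis using that h' h_eq by blast
qed

lemma pointed_component_exists:
  assumes "finite (Fo P)" "P \<in> cat_obj C" "z \<in> Fo P"
  shows "\<exists>K c \<iota>. pointed_component P z K c \<iota>"
  using assms
proof (induction "card (Fo P)" arbitrary: P z rule: less_induct)
  case less
  show ?case
  proof (cases "connected_obj C P")
    case True
    then have "pointed_component P z P z (cat_id C P)"
      unfolding pointed_component_def using id_hom Fa_id less.prems by auto
    then show ?thesis by blast
  next
    case False
    then obtain A1 A2 i1 i2 where A: "is_coproduct C A1 A2 P i1 i2" "Fo A1 \<noteq> {}" "Fo A2 \<noteq> {}"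
      using disconnected_split[OF less.prems(2) False] by blast
    have "z \<in> Fa i1 ` Fo A1 \<or> z \<in> Fa i2 ` Fo A2" using coproduct_fibre[OF A(1)] less.prems(3) by blast
    then obtain Q1 Q2 j1 j2 z1 where Q: "is_coproduct C Q1 Q2 P j1 j2" "Fo Q2 \<noteq> {}"
      and z1: "z1 \<in> Fo Q1" "Fa j1 z1 = z"
      using A coproduct_swap[OF A(1)] by blast
    have j1: "j1 \<in> hom C Q1 P" using coproduct_injections[OF Q(1)] by blast
    note smaller = coproduct_fibre_card_less[OF Q(1) less.prems(1) Q(2)]
    obtain K c \<iota> where K: "pointed_component Q1 z1 K c \<iota>"
      using less.hyps[OF smaller(2,1) conjunct1[OF hom_objs[OF j1]] z1(1)] by blast
    then have \<iota>: "\<iota> \<in> hom C K Q1" "c \<in> Fo K" "Fa \<iota> c = z1"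
      unfolding pointed_component_def by auto
    have "pointed_component P z K c (cat_comp C j1 \<iota>)"
      unfolding pointed_component_def
    proof (intro conjI allI impI)
      show "cat_comp C j1 \<iota> \<in> hom C K P" using comp_hom[OF \<iota>(1) j1] .
      show "Fa (cat_comp C j1 \<iota>) c = z" using Fa_comp[OF \<iota>(1) j1 \<iota>(2)] \<iota>(3) z1(2) by simp
      fix D d k assume "connected_obj C D \<and> d \<in> Fo D \<and> k \<in> hom C D P \<and> Fa k d = z"
      then have D: "connected_obj C D" "d \<in> Fo D" "k \<in> hom C D P" "Fa k d = Fa j1 z1"
        using z1(2) by auto
      obtain k1 where "k1 \<in> hom C D Q1" "Fa k1 d = z1"
        using connected_map_factors_through_summand[OF D(1,3) Q(1) D(2) z1(1) D(4)] by blast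
      then show "\<exists>k'\<in>hom C D K. Fa k' d = c"
        using K D unfolding pointed_component_def by blast
    qed (use K \<iota> in \<open>simp_all add: pointed_component_def\<close>)
    then show ?thesis by blast
  qed
qed

lemma arrow_eq_if_eq_on_connected:
  assumes "finite (Fo W)" "u \<in> hom C W Z" "v \<in> hom C W Z"
    and "\<And>V t. connected_obj C V \<Longrightarrow> Fo V \<noteq> {} \<Longrightarrow> t \<in> hom C V W \<Longrightarrow>
      cat_comp C u t = cat_comp C v t"
  shows "u = v"
  using assms
proof (induction "card (Fo W)" arbitrary: W u v rule: less_induct)
  case less
  have W: "W \<in> cat_obj C" using hom_objs[OF less.prems(2)] by simp
  consider "Fo W = {}" | "connected_obj C W" "Fo W \<noteq> {}" | "\<not> connected_obj C W" by blast
  then show ?case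
  proof cases
    case 1
    then show ?thesis
      using initial_hom_unique less.prems(2,3) initial_iff_fibre_empty[OF W] by blast
  next
    case 2
    then show ?thesis
      using less.prems(4)[OF 2 id_hom[OF W]] comp_id_right less.prems(2,3) by simp
  next
    case 3
    then obtain A1 A2 i1 i2 where A: "is_coproduct C A1 A2 W i1 i2" "Fo A1 \<noteq> {}" "Fo A2 \<noteq> {}"
      using disconnected_split[OF W] by blast
    have on_summand: "cat_comp C u i = cat_comp C v i"
      if c: "is_coproduct C A A' W i i'" and A': "Fo A' \<noteq> {}" for A A' i i'
    proof -
      have i: "i \<in> hom C A W" using coproduct_injections[OF c] by blast
      note smaller = coproduct_fibre_card_less[OF c less.prems(1) A']
      show ?thesis
      proof (rule less.hyps[OF smaller(2,1) comp_hom[OF i less.prems(2)] comp_hom[OF i less.prems(3)]])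
        fix V t assume V: "connected_obj C V" "Fo V \<noteq> {}" and t: "t \<in> hom C V A"
        show "cat_comp C (cat_comp C u i) t = cat_comp C (cat_comp C v i) t"
          using less.prems(4)[OF V comp_hom[OF t i]]
          by (simp add: comp_assoc[OF t i less.prems(2)] comp_assoc[OF t i less.prems(3)])
      qed
    qed
    show ?thesis
      using coproduct_arrow_eqI[OF A(1) less.prems(2,3)]
        on_summand[OF A(1) A(3)] on_summand[OF coproduct_swap[OF A(1)] A(2)] by blast
  qed
qed

lemma compatible_if_compatible_on_connected:
  assumes f: "f \<in> hom C X Y" and X: "connected_obj C X" and g: "g \<in> hom C X Z"
    and H: "\<And>W u v. connected_obj C W \<Longrightarrow> Fo W \<noteq> {} \<Longrightarrow> u \<in> hom C W X \<Longrightarrow> v \<in> hom C W X \<Longrightarrow>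
      cat_comp C f u = cat_comp C f v \<Longrightarrow> cat_comp C g u = cat_comp C g v"
  shows "compatible C f g"
proof -
  obtain P p1 p2 where pb: "is_pullback C f f P p1 p2" using pullback_exists[OF f f] by blast
  note legs = pullback_legs[OF pb f f]
  have "{(x, y). x \<in> Fo X \<and> y \<in> Fo X \<and> Fa f x = Fa f y} \<subseteq> Fo X \<times> Fo X" by auto
  then have "finite (Fo P)"
    using bij_betw_finite[OF pullback_fibre[OF pb f f]] connected_fibre_finite[OF X]
    by (meson finite_SigmaI finite_subset)
  then have kernel_pair: "cat_comp C g p1 = cat_comp C g p2"
  proof (rule arrow_eq_if_eq_on_connected[OF _ comp_hom[OF legs(1) g] comp_hom[OF legs(2) g]])
    fix V t assume V: "connected_obj C V" "Fo V \<noteq> {}" and t: "t \<in> hom C V P"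
    have "cat_comp C f (cat_comp C p1 t) = cat_comp C f (cat_comp C p2 t)"
      by (simp add: comp_assoc[OF t legs(1) f] comp_assoc[OF t legs(2) f] legs(3))
    then show "cat_comp C (cat_comp C g p1) t = cat_comp C (cat_comp C g p2) t"
      using H[OF V comp_hom[OF t legs(1)] comp_hom[OF t legs(2)]]
      by (simp add: comp_assoc[OF t legs(1) g] comp_assoc[OF t legs(2) g])
  qed
  have dom: "cat_dom C f = X" "cat_dom C g = X" "g \<in> cat_arr C"
    using f g unfolding hom_def by auto
  show ?thesis
    unfolding compatible_def dom
  proof (intro conjI ballI impI dom refl)
    fix W u v assume W: "W \<in> cat_obj C" "u \<in> hom C W X" "v \<in> hom C W X"
      and eq: "cat_comp C f u = cat_comp C f v"
    obtain k where k: "k \<in> hom C W P" "cat_comp C p1 k = u" "cat_comp C p2 k = v"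
      using pullback_factor[OF pb f f W eq] .
    have "cat_comp C g u = cat_comp C (cat_comp C g p1) k"
      using comp_assoc[OF k(1) legs(1) g] k(2) by simp
    also have "\<dots> = cat_comp C g v"
      using comp_assoc[OF k(1) legs(2) g] k(3) kernel_pair by simp
    finally show "cat_comp C g u = cat_comp C g v" .
  qed
qed

section \<open>The category of non-empty connected objects\<close>

lemma strict_epi_Con:
  assumes f: "f \<in> hom (Con C) X Y"
  shows "strict_epi (Con C) f"
  unfolding strict_epi_def
proof (intro conjI allI impI)
  have fC: "f \<in> hom C X Y" and X: "X \<in> cat_obj (Con C)" and Y: "Y \<in> cat_obj (Con C)"
    using f unfolding hom_Con by auto
  have f_dom: "cat_dom C f = X" and f_cod: "cat_cod C f = Y" using fC unfolding hom_def by auto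
  show "f \<in> cat_arr (Con C)" using f unfolding hom_def by simp
  fix g assume g: "compatible (Con C) f g"
  define Z where "Z = cat_cod C g"
  have "g \<in> hom (Con C) X Z"
    using compatibleD(1,2)[OF g] f_dom unfolding arr_iff_hom Con_simps(2,3) Z_def by simp
  then have gC: "g \<in> hom C X Z" and Z: "Z \<in> cat_obj (Con C)" unfolding hom_Con by auto
  have "compatible C f g"
  proof (rule compatible_if_compatible_on_connected[OF fC _ gC])
    show "connected_obj C X" using X unfolding obj_Con by simp
    fix W u v assume "connected_obj C W" "Fo W \<noteq> {}" "u \<in> hom C W X" "v \<in> hom C W X"
      and "cat_comp C f u = cat_comp C f v"
    then have "W \<in> cat_obj (Con C)" "u \<in> hom (Con C) W (cat_dom (Con C) f)"
      "v \<in> hom (Con C) W (cat_dom (Con C) f)"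
      using X unfolding hom_Con obj_Con Con_simps(2) f_dom by auto
    then show "cat_comp C g u = cat_comp C g v"
      using compatibleD(3)[OF g] \<open>cat_comp C f u = cat_comp C f v\<close> unfolding Con_simps(5) by blast
  qed
  moreover have "strict_epi C f"
    using strict_epi_onto_connected[OF fC] X Y unfolding obj_Con by blast
  ultimately have "\<exists>!k. k \<in> hom C Y Z \<and> g = cat_comp C k f"
    unfolding strict_epi_def f_cod Z_def by blast
  moreover have "hom (Con C) Y Z = hom C Y Z"
    using Y Z by (auto simp: hom_Con)
  ultimately show "\<exists>!k. k \<in> hom (Con C) (cat_cod (Con C) f) (cat_cod (Con C) g) \<and>
      g = cat_comp (Con C) k f"
    unfolding Con_simps(3,5) f_cod Z_def[symmetric] by simp
qed

lemma connected_if_fibre_surj: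
  assumes A: "connected_obj C A" and q: "q \<in> hom C A Q" and surj: "Fa q ` Fo A = Fo Q"
  shows "connected_obj C Q"
proof (rule connected_objI)
  show "Q \<in> cat_obj C" using hom_objs[OF q] by simp
  fix A1 A2 i1 i2 assume c: "is_coproduct C A1 A2 Q i1 i2"
  have disj: "Fa i1 ` Fo A1 \<inter> Fa i2 ` Fo A2 = {}"
    and cover: "Fa i1 ` Fo A1 \<union> Fa i2 ` Fo A2 = Fo Q"
    using coproduct_fibre[OF c] by auto
  from connected_map_into_summand[OF A q c] show "Fo A1 = {} \<or> Fo A2 = {}"
  proof
    assume "Fa q ` Fo A \<subseteq> Fa i1 ` Fo A1"
    then have "Fa i2 ` Fo A2 \<subseteq> Fa i1 ` Fo A1" using cover surj by (metis Un_upper2 order_trans)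
    then have "Fa i2 ` Fo A2 = {}" using disj by blast
    then show ?thesis by simp
  next
    assume "Fa q ` Fo A \<subseteq> Fa i2 ` Fo A2"
    then have "Fa i1 ` Fo A1 \<subseteq> Fa i2 ` Fo A2" using cover surj by (metis Un_upper1 order_trans)
    then have "Fa i1 ` Fo A1 = {}" using disj by blast
    then show ?thesis by simp
  qed
qed

lemma terminal_in_Con:
  assumes T: "is_terminal C T"
  shows "T \<in> cat_obj (Con C)"
proof -
  obtain t where t: "t \<in> Fo T" "\<And>x. x \<in> Fo T \<Longrightarrow> x = t" using terminal_fibre[OF T] by blast
  have "connected_obj C T"
  proof (rule connected_objI)
    show "T \<in> cat_obj C" using T unfolding is_terminal_def by simp
    fix A1 A2 i1 i2 assume c: "is_coproduct C A1 A2 T i1 i2"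
    have disj: "Fa i1 ` Fo A1 \<inter> Fa i2 ` Fo A2 = {}"
      and cover: "Fa i1 ` Fo A1 \<union> Fa i2 ` Fo A2 = Fo T"
      using coproduct_fibre[OF c] by auto
    have "Fa i1 ` Fo A1 = {} \<or> Fa i2 ` Fo A2 = {}"
    proof (rule ccontr)
      assume "\<not> ?thesis"
      then obtain x y where xy: "x \<in> Fa i1 ` Fo A1" "y \<in> Fa i2 ` Fo A2" by blast
      then have "x = t" "y = t" using cover t(2) by auto
      then show False using xy disj by blast
    qed
    then show "Fo A1 = {} \<or> Fo A2 = {}" by simp
  qed
  then show ?thesis unfolding obj_Con using t(1) by blast
qed

lemma product_exists:
  assumes A: "A \<in> cat_obj C" and B: "B \<in> cat_obj C"
  obtains P p1 p2 where "p1 \<in> hom C P A" "p2 \<in> hom C P B"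
    "bij_betw (\<lambda>z. (Fa p1 z, Fa p2 z)) (Fo P) (Fo A \<times> Fo B)"
    "\<And>D f g. f \<in> hom C D A \<Longrightarrow> g \<in> hom C D B \<Longrightarrow>
      \<exists>k\<in>hom C D P. cat_comp C p1 k = f \<and> cat_comp C p2 k = g"
proof -
  obtain T where T: "is_terminal C T" using terminal_exists ..
  obtain tA tB where tA: "tA \<in> hom C A T" and tB: "tB \<in> hom C B T"
    using T A B unfolding is_terminal_def by blast
  obtain P p1 p2 where pb: "is_pullback C tA tB P p1 p2" using pullback_exists[OF tA tB] by blast
  note legs = pullback_legs[OF pb tA tB]
  have "{(x, y). x \<in> Fo A \<and> y \<in> Fo B \<and> Fa tA x = Fa tB y} = Fo A \<times> Fo B"
    using terminal_fibre[OF T] Fa_hom[OF tA] Fa_hom[OF tB] by blast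
  then have "bij_betw (\<lambda>z. (Fa p1 z, Fa p2 z)) (Fo P) (Fo A \<times> Fo B)"
    using pullback_fibre[OF pb tA tB] by simp
  moreover have "\<exists>k\<in>hom C D P. cat_comp C p1 k = f \<and> cat_comp C p2 k = g"
    if f: "f \<in> hom C D A" and g: "g \<in> hom C D B" for D f g
  proof -
    have "cat_comp C tA f = cat_comp C tB g"
      using terminal_hom_unique[OF T comp_hom[OF f tA] comp_hom[OF g tB]] .
    then show ?thesis
      using pullback_factor[OF pb tA tB conjunct1[OF hom_objs[OF f]] f g] by blast
  qed
  ultimately show thesis using that legs(1,2) by blast
qed

lemma Con_top_meet: "\<exists>m. is_meet (Con C) Fo Fa {} m"
proof -
  obtain T where T: "is_terminal C T" using terminal_exists ..
  obtain t where t: "t \<in> Fo T" "\<And>x. x \<in> Fo T \<Longrightarrow> x = t" using terminal_fibre[OF T] by blast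
  have "gamma_le (Con C) Fa (d, D) (t, T)" if "(d, D) \<in> Gamma (Con C) Fo" for d D
  proof -
    have D: "D \<in> cat_obj (Con C)" "d \<in> Fo D" using that unfolding Gamma_iff by auto
    then obtain f where f: "f \<in> hom C D T"
      using T unfolding is_terminal_def obj_Con connected_obj_def by blast
    then have "f \<in> hom (Con C) D T" using D terminal_in_Con[OF T] unfolding hom_Con by blast
    then show ?thesis unfolding gamma_le_iff using t(2)[OF Fa_hom[OF f D(2)]] by blast
  qed
  then have "\<forall>n\<in>Gamma (Con C) Fo. gamma_le (Con C) Fa n (t, T)" by (metis prod.collapse)
  then have "is_meet (Con C) Fo Fa {} (t, T)"
    unfolding is_meet_def using terminal_in_Con[OF T] t(1) by (simp add: Gamma_iff)
  then show ?thesis ..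
qed

lemma Con_binary_meet:
  assumes "p \<in> Gamma (Con C) Fo" "q \<in> Gamma (Con C) Fo"
  shows "\<exists>m. is_meet (Con C) Fo Fa {p, q} m"
proof -
  obtain a A b B where pq: "p = (a, A)" "q = (b, B)" by fastforce
  have A: "A \<in> cat_obj (Con C)" "a \<in> Fo A" and B: "B \<in> cat_obj (Con C)" "b \<in> Fo B"
    using assms unfolding pq Gamma_iff by auto
  have AC: "A \<in> cat_obj C" "connected_obj C A" and BC: "B \<in> cat_obj C" "connected_obj C B"
    using A(1) B(1) unfolding obj_Con connected_obj_def by auto
  obtain P p1 p2 where p: "p1 \<in> hom C P A" "p2 \<in> hom C P B"
    and pairing: "bij_betw (\<lambda>z. (Fa p1 z, Fa p2 z)) (Fo P) (Fo A \<times> Fo B)"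
    and factor: "\<And>D f g. f \<in> hom C D A \<Longrightarrow> g \<in> hom C D B \<Longrightarrow>
      \<exists>k\<in>hom C D P. cat_comp C p1 k = f \<and> cat_comp C p2 k = g"
    by (rule product_exists[OF AC(1) BC(1)]) (rule that)
  have "(a, b) \<in> (\<lambda>z. (Fa p1 z, Fa p2 z)) ` Fo P"
    using pairing A(2) B(2) unfolding bij_betw_def by simp
  then obtain z where z: "z \<in> Fo P" "Fa p1 z = a" "Fa p2 z = b" by auto
  have "finite (Fo P)"
    using bij_betw_finite[OF pairing] connected_fibre_finite[OF AC(2)] connected_fibre_finite[OF BC(2)]
    by simp
  moreover have "P \<in> cat_obj C" using hom_objs[OF p(1)] by simp
  ultimately obtain K c \<iota> where K: "pointed_component P z K c \<iota>"
    using pointed_component_exists z(1) by blast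
  then have \<iota>: "\<iota> \<in> hom C K P" "c \<in> Fo K" "Fa \<iota> c = z" and KCon: "K \<in> cat_obj (Con C)"
    unfolding pointed_component_def obj_Con by auto
  have "cat_comp C p1 \<iota> \<in> hom (Con C) K A" "Fa (cat_comp C p1 \<iota>) c = a"
    using comp_hom[OF \<iota>(1) p(1)] KCon A(1) Fa_comp[OF \<iota>(1) p(1) \<iota>(2)] \<iota>(3) z(2)
    unfolding hom_Con by auto
  then have le_p: "gamma_le (Con C) Fa (c, K) p" unfolding pq gamma_le_iff by blast
  have "cat_comp C p2 \<iota> \<in> hom (Con C) K B" "Fa (cat_comp C p2 \<iota>) c = b"
    using comp_hom[OF \<iota>(1) p(2)] KCon B(1) Fa_comp[OF \<iota>(1) p(2) \<iota>(2)] \<iota>(3) z(3)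
    unfolding hom_Con by auto
  then have le_q: "gamma_le (Con C) Fa (c, K) q" unfolding pq gamma_le_iff by blast
  have greatest: "gamma_le (Con C) Fa n (c, K)"
    if n_Gamma: "n \<in> Gamma (Con C) Fo" and n_le: "gamma_le (Con C) Fa n p" "gamma_le (Con C) Fa n q"
    for n
  proof -
    obtain d D where n: "n = (d, D)" by fastforce
    have D: "D \<in> cat_obj (Con C)" "d \<in> Fo D" using n_Gamma unfolding n Gamma_iff by auto
    obtain f g where "f \<in> hom (Con C) D A" "Fa f d = a" "g \<in> hom (Con C) D B" "Fa g d = b"
      using n_le unfolding n pq gamma_le_iff by blast
    then have f: "f \<in> hom C D A" "Fa f d = a" and g: "g \<in> hom C D B" "Fa g d = b"
      unfolding hom_Con by auto
    obtain k where k: "k \<in> hom C D P" "cat_comp C p1 k = f" "cat_comp C p2 k = g"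
      using factor[OF f(1) g(1)] by blast
    have "(Fa p1 (Fa k d), Fa p2 (Fa k d)) = (Fa p1 z, Fa p2 z)"
      using Fa_comp[OF k(1) p(1) D(2)] Fa_comp[OF k(1) p(2) D(2)] k(2,3) f(2) g(2) z(2,3) by simp
    then have "Fa k d = z"
      using inj_onD[OF bij_betw_imp_inj_on[OF pairing] _ Fa_hom[OF k(1) D(2)] z(1)] by blast
    then obtain k' where k': "k' \<in> hom C D K" "Fa k' d = c"
      using K D k(1) unfolding pointed_component_def obj_Con by blast
    then have "k' \<in> hom (Con C) D K" using D(1) KCon unfolding hom_Con by blast
    then show ?thesis unfolding n gamma_le_iff using k'(2) by blast
  qed
  have "is_meet (Con C) Fo Fa {p, q} (c, K)"
    unfolding is_meet_def using KCon \<iota>(2) le_p le_q greatest by (simp add: Gamma_iff)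
  then show ?thesis ..
qed

lemma C0_Con: "C0 (Con C) Fo Fa"
  unfolding C0_def
proof (intro conjI ballI)
  show "Fo A \<noteq> {}" if "A \<in> cat_obj (Con C)" for A using that unfolding obj_Con by simp
  show "strict_epi (Con C) f" if "f \<in> cat_arr (Con C)" for f
    using that unfolding arr_iff_hom by (rule strict_epi_Con)
qed

lemma C1_Con: "C1 (Con C) Fo Fa group_type"
  unfolding C1_def
proof (intro allI impI, elim conjE)
  fix G :: "'g monoid" and A \<rho> assume act: "group_action (Con C) G A \<rho>" and fin: "finite (carrier G)"
  have A: "A \<in> cat_obj (Con C)" using act unfolding group_action_def by blast
  then have actC: "group_action C G A \<rho>"
    using act unfolding group_action_def Con_simps(4,5) hom_Con Con_simps(1) by auto
  have AC: "connected_obj C A" "Fo A \<noteq> {}" using A unfolding obj_Con by auto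
  obtain Q q where quot: "is_quotient C G A \<rho> Q q" using quotient_exists[OF actC fin] by blast
  have fibres: "quotient_fibre_bij Fo Fa G A \<rho> Q q" using quotient_fibre[OF actC fin quot] .
  have q: "q \<in> hom C A Q" and q_inv: "\<forall>h\<in>carrier G. cat_comp C q (\<rho> h) = q"
    and q_univ: "\<forall>Z\<in>cat_obj C. \<forall>g\<in>hom C A Z. (\<forall>h\<in>carrier G. cat_comp C g (\<rho> h) = g) \<longrightarrow>
      (\<exists>!k. k \<in> hom C Q Z \<and> cat_comp C k q = g)"
    using quot unfolding is_quotient_def by auto
  have surj: "Fa q ` Fo A = Fo Q" using fibres unfolding quotient_fibre_bij_def by simp
  have Q: "Q \<in> cat_obj (Con C)"
    unfolding obj_Con using connected_if_fibre_surj[OF AC(1) q surj] surj AC(2) by blast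
  have "is_quotient (Con C) G A \<rho> Q q"
    unfolding is_quotient_def Con_simps(5)
  proof (intro conjI ballI impI)
    show "q \<in> hom (Con C) A Q" unfolding hom_Con using q A Q by blast
    show "cat_comp C q (\<rho> h) = q" if "h \<in> carrier G" for h using q_inv that by blast
    fix Z g assume Z: "Z \<in> cat_obj (Con C)" and g: "g \<in> hom (Con C) A Z"
      and g_inv: "\<forall>h\<in>carrier G. cat_comp C g (\<rho> h) = g"
    have "hom (Con C) Q Z = hom C Q Z" using Q Z by (auto simp: hom_Con)
    moreover have "Z \<in> cat_obj C" "g \<in> hom C A Z"
      using Z g unfolding hom_Con Con_simps(1) by auto
    ultimately show "\<exists>!k. k \<in> hom (Con C) Q Z \<and> cat_comp C k q = g"
      using q_univ g_inv by simp
  qed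
  then show "\<exists>Q q. is_quotient (Con C) G A \<rho> Q q \<and> quotient_fibre_bij Fo Fa G A \<rho> Q q"
    using fibres by blast
qed

lemma C2_Con: "C2 (Con C) Fo Fa"
  unfolding C2_def
proof (intro conjI ballI allI impI)
  show "finite (Fo A)" if "A \<in> cat_obj (Con C)" for A
    using that connected_fibre_finite unfolding obj_Con by blast
  fix f assume "strict_epi (Con C) f"
  then have "f \<in> cat_arr (Con C)" unfolding strict_epi_def by blast
  then have f: "f \<in> hom C (cat_dom C f) (cat_cod C f)"
    and dom: "Fo (cat_dom C f) \<noteq> {}" and cod: "connected_obj C (cat_cod C f)"
    unfolding arr_iff_hom hom_Con Con_simps(2,3) obj_Con by auto
  show "Fa f ` Fo (cat_dom (Con C) f) = Fo (cat_cod (Con C) f)"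
    unfolding Con_simps(2,3) using strict_epi_fibre_surj[OF strict_epi_onto_connected[OF f cod dom] f] .
qed

lemma C3_Con: "C3 (Con C) Fo Fa"
proof -
  interpret Con: set_valued_functor "Con C" Fo Fa
    unfolding Con_def
    by unfold_locales (simp_all add: category_full_sub[OF category] set_functor_full_sub[OF set_functor])
  show ?thesis using Con.C3_if_binary_meets[OF Con_top_meet Con_binary_meet] .
qed

end

theorem theorem4p13:
  fixes C :: "('o, 'a) cat"
    and Fo :: "'o \<Rightarrow> 'x set"
    and Fa :: "'a \<Rightarrow> 'x \<Rightarrow> 'x"
  assumes "category C"
    and "set_functor C Fo Fa"
    and "G0 C Fo Fa"
    and "G1 C"
    and "G2 C TYPE('g)"
    and "G3 C"
    and "G4 C Fo Fa"
    and "G5 C Fo Fa TYPE('g)"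
    and "G6 C Fo Fa"
  shows "C0 (Con C) Fo Fa \<and> C1 (Con C) Fo Fa TYPE('g) \<and> C2 (Con C) Fo Fa \<and> C3 (Con C) Fo Fa"
proof -
  interpret galois_category C Fo Fa "TYPE('g)"
    by unfold_locales (fact assms)+
  show ?thesis using C0_Con C1_Con C2_Con C3_Con by blast
qed

end
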